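(* Let $k\geq 3$ be an integer and $\Sigma_k=\{\sigma_1,\ldots,\sigma_k\}$. Consider $r=k$ users over $\Sigma_k$, where for each $i\in[k]$ the confusion graph $G_i$ of user $i$ is a clique on $\Sigma_k\setminus\{\sigma_i\}$ (with $\sigma_i$ isolated). Then the rate vector $\left(\frac{\log_2 k}{k},\ldots,\frac{\log_2 k}{k}\right)$ is feasible.
   Context: Setting: a sender broadcasts a word of length $n$ over a finite alphabet $\Sigma$ to $r$ users; user $i$ has a confusion graph $G_i$ on vertex set $\Sigma$, where $ab$ is an edge iff user $i$ cannot distinguish letters $a$ and $b$. Two words $x,y\in\Sigma^n$ are distinguishable by user $i$ if there is a coordinate $t$ with $x_t\neq y_t$ and $x_ty_t$ not an edge of $G_i$. A vector $(m_1,\ldots,m_r)$ of positive integers is feasible for length $n$ if there is a map $E:[m_1]\times\cdots\times[m_r]\to\Sigma^n$ such that for every $i$ and all tuples $a,a'$ with $a_i\neq a'_i$, $E(a)$ and $E(a')$ are distinguishable by user $i$. A rate vector $(R_1,\ldots,R_r)$ is feasible if there is a sequence of feasible vectors for lengths $n\to\infty$ with $R_i=\lim_{n\to\infty}\frac{\log_2 m_i^{(n)}}{n}$ for all $i$. *)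

theory Defs
  imports Complex_Main "HOL-Library.FuncSet"
begin

text \<open>Words of length n over alphabet Alph are lists of length n with letters in Alph.
  Confusion graphs: G i a b holds iff user i cannot distinguish letters a and b.
  Users are indexed by 0..<r.\<close>

definition words :: "'a set \<Rightarrow> nat \<Rightarrow> 'a list set" where
  "words Alph n = {x. length x = n \<and> set x \<subseteq> Alph}"

definition distinguishable :: "('a \<Rightarrow> 'a \<Rightarrow> bool) \<Rightarrow> 'a list \<Rightarrow> 'a list \<Rightarrow> bool" where
  "distinguishable Gi x y \<longleftrightarrow>
     (\<exists>t < min (length x) (length y). x ! t \<noteq> y ! t \<and> \<not> Gi (x ! t) (y ! t))"

definition tuples :: "nat \<Rightarrow> (nat \<Rightarrow> nat) \<Rightarrow> (nat \<Rightarrow> nat) set" where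
  "tuples r m = PiE {..<r} (\<lambda>i. {..<m i})"

definition feasible_vector ::
  "'a set \<Rightarrow> nat \<Rightarrow> (nat \<Rightarrow> 'a \<Rightarrow> 'a \<Rightarrow> bool) \<Rightarrow> nat \<Rightarrow> (nat \<Rightarrow> nat) \<Rightarrow> bool" where
  "feasible_vector Alph r G n m \<longleftrightarrow>
     (\<forall>i<r. m i > 0) \<and>
     (\<exists>E. (\<forall>a\<in>tuples r m. E a \<in> words Alph n) \<and>
          (\<forall>i<r. \<forall>a\<in>tuples r m. \<forall>a'\<in>tuples r m.
              a i \<noteq> a' i \<longrightarrow> distinguishable (G i) (E a) (E a')))"

definition feasible_rate ::
  "'a set \<Rightarrow> nat \<Rightarrow> (nat \<Rightarrow> 'a \<Rightarrow> 'a \<Rightarrow> bool) \<Rightarrow> (nat \<Rightarrow> real) \<Rightarrow> bool" where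
  "feasible_rate Alph r G R \<longleftrightarrow>
     (\<exists>M :: nat \<Rightarrow> nat \<Rightarrow> nat.
        (\<forall>n. feasible_vector Alph r G n (M n)) \<and>
        (\<forall>i<r. (\<lambda>n. log 2 (real (M n i)) / real n) \<longlonglongrightarrow> R i))"

end

theory Submission
  imports Defs "HOL-Real_Asymp.Real_Asymp"
begin

text \<open>User i only learns which positions of a word carry the letter i. Cut the word into
  k blocks of length kL. Inside a block the users are served one after another: the user
  served at stage s chooses L of the (k - s)L positions still free, and that choice encodes a
  digit below roughly binom((k - s)L, L) / (kL), decoded through a colouring of L-sets in
  which every (k - s)L-set contains L-subsets of every colour; such colourings exist by a
  union bound. Rotating the order of service from block to block, every user occupies every
  stage exactly once, so it can receive one message out of the product of all stage sizes,
  which is k^(kL) up to a factor polynomial in kL. With n about k^2 L this gives the rate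
  log k / k for every user.\<close>

section \<open>Binomial estimates\<close>

lemma binomial_Suc_right_mult: "(n choose Suc j) * Suc j = (n choose j) * (n - j)"
proof (cases n)
  case (Suc m)
  have "(Suc m choose Suc j) * Suc j = Suc m * (m choose j)"
    by (rule Suc_times_binomial_eq[symmetric])
  also have "\<dots> = (Suc m - j) * (Suc m choose j)"
    using binomial_absorb_comp[of "Suc m" j] by simp
  finally show ?thesis
    using Suc by (simp add: mult.commute)
qed simp

lemma binomial_mult_power_le: "(n choose j) * a ^ (n - j) \<le> Suc a ^ n"
proof (cases "j \<le> n")
  case True
  have "(n choose j) * a ^ (n - j) \<le> (\<Sum>i\<le>n. (n choose i) * a ^ (n - i))"
    using True by (intro member_le_sum) auto
  also have "\<dots> = Suc a ^ n"
    using binomial[of 1 a n] by simp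
  finally show ?thesis .
qed (simp add: binomial_eq_0)

lemma binomial_term_unimodal:
  fixes a L x :: nat
  defines "N \<equiv> Suc a * L"
  shows "x < L \<Longrightarrow> (N choose x) * a ^ (N - x) \<le> (N choose Suc x) * a ^ (N - Suc x)"
    and "L \<le> x \<Longrightarrow> x < N \<Longrightarrow> (N choose Suc x) * a ^ (N - Suc x) \<le> (N choose x) * a ^ (N - x)"
proof -
  have next_term: "(N choose Suc x) * a ^ (N - Suc x) * Suc x = (N choose x) * (N - x) * a ^ (N - Suc x)"
    by (metis binomial_Suc_right_mult mult.assoc mult.commute)
  have this_term: "(N choose x) * a ^ (N - x) * Suc x = (N choose x) * (a * Suc x) * a ^ (N - Suc x)"
    if "x < N"
  proof -
    have "N - x = Suc (N - Suc x)"
      using that by simp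
    then show ?thesis
      by (simp add: algebra_simps)
  qed
  show "(N choose x) * a ^ (N - x) \<le> (N choose Suc x) * a ^ (N - Suc x)" if "x < L"
  proof -
    have "x < N" "a * Suc x \<le> N - x"
      using that mult_le_mono2[of "Suc x" L a] unfolding N_def by simp_all
    then have "(N choose x) * a ^ (N - x) * Suc x \<le> (N choose Suc x) * a ^ (N - Suc x) * Suc x"
      unfolding this_term[OF \<open>x < N\<close>] next_term by (intro mult_le_mono1 mult_le_mono2)
    then show ?thesis
      using mult_le_cancel2 by blast
  qed
  show "(N choose Suc x) * a ^ (N - Suc x) \<le> (N choose x) * a ^ (N - x)" if "L \<le> x" "x < N"
  proof -
    have "a * L \<le> a * x"
      using that by simp
    then have "N - x \<le> a * Suc x"
      using that unfolding N_def mult_Suc mult_Suc_right by linarith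
    then have "(N choose Suc x) * a ^ (N - Suc x) * Suc x \<le> (N choose x) * a ^ (N - x) * Suc x"
      unfolding this_term[OF \<open>x < N\<close>] next_term by (intro mult_le_mono1 mult_le_mono2)
    then show ?thesis
      using mult_le_cancel2 by blast
  qed
qed

lemma binomial_term_le_middle:
  fixes a L j :: nat
  defines "N \<equiv> Suc a * L"
  shows "(N choose j) * a ^ (N - j) \<le> (N choose L) * a ^ (N - L)"
proof (cases "j \<le> L")
  case True
  then show ?thesis
    by (induction j rule: inc_induct)
      (use binomial_term_unimodal(1)[of _ L a, folded N_def] order_trans in blast)+
next
  case False
  show ?thesis
  proof (cases "j \<le> N")
    case True
    from \<open>\<not> j \<le> L\<close> have "L \<le> j"
      by simp
    then show ?thesis
      using True by (induction j rule: dec_induct)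
        (auto intro: order_trans[OF binomial_term_unimodal(2)[of L _ a, folded N_def]] simp: Suc_le_eq)
  qed (simp add: binomial_eq_0)
qed

lemma power_le_binomial_middle:
  fixes a L :: nat
  shows "Suc a ^ (Suc a * L) \<le> (Suc a * L + 1) * ((Suc a * L choose L) * a ^ (a * L))"
proof -
  define N where "N = Suc a * L"
  have "Suc a ^ N = (\<Sum>j\<le>N. (N choose j) * a ^ (N - j))"
    using binomial[of 1 a N] by simp
  also have "\<dots> \<le> (\<Sum>j\<le>N. (N choose L) * a ^ (N - L))"
    unfolding N_def by (intro sum_mono binomial_term_le_middle)
  also have "\<dots> = (N + 1) * ((N choose L) * a ^ (a * L))"
    unfolding N_def by simp
  finally show ?thesis
    unfolding N_def .
qed

lemma prod_binomial_multiples_le: "(\<Prod>m=1..K. m * L choose L) \<le> K ^ (K * L)"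
proof (induction K)
  case (Suc K)
  have "(\<Prod>m=1..Suc K. m * L choose L) = (Suc K * L choose L) * (\<Prod>m=1..K. m * L choose L)"
    by (simp add: prod.cl_ivl_Suc)
  also have "\<dots> \<le> (Suc K * L choose L) * K ^ (Suc K * L - L)"
    using Suc.IH by simp
  also have "\<dots> \<le> Suc K ^ (Suc K * L)"
    by (rule binomial_mult_power_le)
  finally show ?case .
qed simp

lemma power_le_prod_binomial_multiples:
  "K ^ (K * L) \<le> (\<Prod>m=1..K. (m * L + 1) * (m * L choose L))"
proof (induction K)
  case (Suc K)
  have "Suc K ^ (Suc K * L) \<le> (Suc K * L + 1) * ((Suc K * L choose L) * K ^ (K * L))"
    by (rule power_le_binomial_middle)
  also have "\<dots> \<le> (Suc K * L + 1) * ((Suc K * L choose L) * (\<Prod>m=1..K. (m * L + 1) * (m * L choose L)))"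
    using Suc.IH by (intro mult_le_mono2)
  also have "\<dots> = (\<Prod>m=1..Suc K. (m * L + 1) * (m * L choose L))"
    by (simp only: prod.cl_ivl_Suc mult_ac) simp
  finally show ?case .
qed simp

section \<open>Polychromatic colourings\<close>

lemma card_PiE_avoiding:
  assumes "finite X" "A \<subseteq> X" "x < M"
  shows "real (card {c \<in> PiE X (\<lambda>_. {..<M}). \<forall>y\<in>A. c y \<noteq> x})
           = real M ^ card X * (1 - 1 / real M) ^ card A"
proof -
  have "{c \<in> PiE X (\<lambda>_. {..<M}). \<forall>y\<in>A. c y \<noteq> x}
          = PiE X (\<lambda>y. if y \<in> A then {..<M} - {x} else {..<M})"
    using assms(2) by (auto simp: PiE_def Pi_def split: if_splits)
  then have "card {c \<in> PiE X (\<lambda>_. {..<M}). \<forall>y\<in>A. c y \<noteq> x} = (M - 1) ^ card A * M ^ card (X - A)"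
    using assms by (simp add: card_PiE if_distrib prod.If_cases Int_absorb1 Diff_eq[symmetric] cong: if_cong)
  moreover have "card X = card A + card (X - A)"
    using assms by (metis card_Diff_subset card_mono finite_subset le_add_diff_inverse)
  moreover have "real M - 1 = real M * (1 - 1 / real M)"
    using assms(3) by (simp add: field_simps)
  ultimately show ?thesis
    using assms(3) by (simp add: power_add power_mult_distrib)
qed

lemma ex_colouring_meeting_all_colours:
  assumes "finite X" "finite I" "\<forall>i\<in>I. A i \<subseteq> X \<and> D \<le> card (A i)" "M > 0"
    and small: "real (card I) * real M * (1 - 1 / real M) ^ D < 1"
  shows "\<exists>c. \<forall>i\<in>I. \<forall>x<M. \<exists>y\<in>A i. c y = x"
proof -
  define Bad where "Bad i x = {c \<in> PiE X (\<lambda>_. {..<M}). \<forall>y\<in>A i. c y \<noteq> x}" for i x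
  have card_Bad: "real (card (Bad i x)) \<le> real M ^ card X * (1 - 1 / real M) ^ D"
    if "i \<in> I" "x < M" for i x
  proof -
    have "real (card (Bad i x)) = real M ^ card X * (1 - 1 / real M) ^ card (A i)"
      unfolding Bad_def using card_PiE_avoiding assms(1,3) that by blast
    also have "\<dots> \<le> real M ^ card X * (1 - 1 / real M) ^ D"
      using assms(3,4) that by (intro mult_left_mono power_decreasing) auto
    finally show ?thesis .
  qed
  have "real (card (\<Union>i\<in>I. \<Union>x<M. Bad i x)) \<le> (\<Sum>i\<in>I. \<Sum>x<M. real (card (Bad i x)))"
  proof -
    have "card (\<Union>i\<in>I. \<Union>x<M. Bad i x) \<le> (\<Sum>i\<in>I. card (\<Union>x<M. Bad i x))"
      using assms(2) by (rule card_UN_le)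
    also have "\<dots> \<le> (\<Sum>i\<in>I. \<Sum>x<M. card (Bad i x))"
      by (intro sum_mono card_UN_le) simp
    finally show ?thesis
      by (simp only: of_nat_le_iff of_nat_sum[symmetric])
  qed
  also have "\<dots> \<le> (\<Sum>i\<in>I. \<Sum>x<M. real M ^ card X * (1 - 1 / real M) ^ D)"
    using card_Bad by (intro sum_mono) auto
  also have "\<dots> = real M ^ card X * (real (card I) * real M * (1 - 1 / real M) ^ D)"
    by (simp add: algebra_simps)
  also have "\<dots> < real (card (PiE X (\<lambda>_. {..<M})))"
    using small assms(1,4) by (simp add: card_PiE)
  finally have "card (\<Union>i\<in>I. \<Union>x<M. Bad i x) < card (PiE X (\<lambda>_. {..<M}))"
    by (simp only: of_nat_less_iff)
  moreover have "finite (\<Union>i\<in>I. \<Union>x<M. Bad i x)"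
    using assms(1,2) by (simp add: Bad_def finite_PiE)
  ultimately have "\<not> PiE X (\<lambda>_. {..<M}) \<subseteq> (\<Union>i\<in>I. \<Union>x<M. Bad i x)"
    using card_mono leD by blast
  then obtain c where "c \<in> PiE X (\<lambda>_. {..<M})" "c \<notin> (\<Union>i\<in>I. \<Union>x<M. Bad i x)"
    by blast
  then show ?thesis
    unfolding Bad_def by blast
qed

lemma one_minus_inverse_power_le_exp:
  fixes x :: real
  assumes "1 \<le> x"
  shows "(1 - 1 / x) ^ n \<le> exp (- (real n / x))"
proof -
  have "(1 - 1 / x) ^ n \<le> exp (- 1 / x) ^ n"
    using assms exp_ge_add_one_self[of "- 1 / x"] by (intro power_mono) (auto simp: field_simps)
  also have "\<dots> = exp (- (real n / x))"
    by (simp flip: exp_of_nat_mult)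
  finally show ?thesis .
qed

lemma four_power_mult_exp_less_one: "4 ^ b * exp (- (2 * real b + 2)) < 1"
proof -
  have "(2::real) \<le> exp 1"
    using exp_ge_add_one_self[of 1] by simp
  then have "(4::real) \<le> exp 1 * exp 1"
    using mult_mono[of 2 "exp 1" 2 "exp (1::real)"] by simp
  then have "(4::real) \<le> exp 2"
    by (simp flip: exp_add)
  have "(4::real) ^ b < 4 ^ Suc b"
    by simp
  also have "\<dots> \<le> exp 2 ^ Suc b"
    using \<open>4 \<le> exp 2\<close> by (intro power_mono) auto
  also have "\<dots> = exp (2 * real b + 2)"
    by (simp flip: exp_of_nat_mult exp_add add: algebra_simps)
  finally have "4 ^ b < exp (2 * real b + 2)" .
  then have "4 ^ b * exp (- (2 * real b + 2)) < exp (2 * real b + 2) * exp (- (2 * real b + 2))"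
    by (intro mult_strict_right_mono) auto
  then show ?thesis
    by (simp flip: exp_add)
qed

lemma union_bound_at_stage_size:
  fixes N D b :: nat
  defines "M \<equiv> max 1 (D div (2 * (b + 1)))"
  assumes "N \<le> 2 ^ b" "1 \<le> D" "D \<le> 2 ^ b"
  shows "real N * real M * (1 - 1 / real M) ^ D < 1"
proof (cases "D div (2 * (b + 1)) = 0")
  case True
  then show ?thesis
    using assms by (simp add: M_def power_0_left)
next
  case False
  then have M: "M = D div (2 * (b + 1))" "M \<ge> 1"
    unfolding M_def by auto
  have "M * (2 * (b + 1)) \<le> D"
    unfolding M(1) by (rule div_times_less_eq_dividend)
  then have "real (M * (2 * (b + 1))) \<le> real D"
    by (simp only: of_nat_le_iff)
  then have "real M * (2 * real b + 2) \<le> real D"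
    by (simp add: algebra_simps)
  then have "2 * real b + 2 \<le> real D / real M"
    using M(2) by (simp add: field_simps)
  then have "exp (- (real D / real M)) \<le> exp (- (2 * real b + 2))"
    by simp
  then have "(1 - 1 / real M) ^ D \<le> exp (- (2 * real b + 2))"
    using one_minus_inverse_power_le_exp[of "real M" D] M(2) by linarith
  moreover have "N * M \<le> 2 ^ b * 2 ^ b"
    using assms(2,4) M(1) div_le_dividend[of D "2 * (b + 1)"] by (intro mult_le_mono) linarith+
  then have "real (N * M) \<le> real (2 ^ b * 2 ^ b)"
    by (simp only: of_nat_le_iff)
  then have "real N * real M \<le> 4 ^ b"
    by (simp flip: power_mult_distrib)
  ultimately have "real N * real M * (1 - 1 / real M) ^ D \<le> 4 ^ b * exp (- (2 * real b + 2))"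
    using M(2) by (intro mult_mono) (auto simp: field_simps)
  also have "\<dots> < 1"
    by (rule four_power_mult_exp_less_one)
  finally show ?thesis .
qed

text \<open>Dividing by 2(b + 1) leaves room for a union bound over the at most 2^b subsets
  of a b-element set.\<close>

definition stage_size :: "nat \<Rightarrow> nat \<Rightarrow> nat \<Rightarrow> nat" where
  "stage_size b f L = max 1 ((f choose L) div (2 * (b + 1)))"

definition polychromatic_on :: "'a set \<Rightarrow> nat \<Rightarrow> nat \<Rightarrow> nat \<Rightarrow> ('a set \<Rightarrow> nat) \<Rightarrow> bool" where
  "polychromatic_on B f L M c \<longleftrightarrow>
     (\<forall>F\<subseteq>B. card F = f \<longrightarrow> (\<forall>x<M. \<exists>S\<subseteq>F. card S = L \<and> c S = x))"

lemma ex_polychromatic_on_stage_size: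
  assumes "finite B" "L \<le> f" "f \<le> card B"
  shows "\<exists>c. polychromatic_on B f L (stage_size (card B) f L) c"
proof -
  define I where "I = {F. F \<subseteq> B \<and> card F = f}"
  have "finite I" "card I \<le> 2 ^ card B"
    unfolding I_def using assms(1) card_mono[of "Pow B" "{F. F \<subseteq> B \<and> card F = f}"]
    by (auto simp: card_Pow)
  have "f choose L \<le> 2 ^ card B"
    using binomial_le_pow2[of f L] power_increasing[OF assms(3), of "2::nat"] by linarith
  moreover have "1 \<le> f choose L"
    using assms(2) by (simp add: Suc_le_eq)
  ultimately have small: "real (card I) * real (stage_size (card B) f L)
                            * (1 - 1 / real (stage_size (card B) f L)) ^ (f choose L) < 1"
    unfolding stage_size_def using \<open>card I \<le> 2 ^ card B\<close> by (intro union_bound_at_stage_size)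
  have members: "\<forall>F\<in>I. {S. S \<subseteq> F \<and> card S = L} \<subseteq> Pow B \<and> f choose L \<le> card {S. S \<subseteq> F \<and> card S = L}"
    unfolding I_def using assms(1) by (auto simp: n_subsets finite_subset)
  have pos: "stage_size (card B) f L > 0"
    by (simp add: stage_size_def)
  obtain c where c: "\<forall>F\<in>I. \<forall>x<stage_size (card B) f L. \<exists>S\<in>{S. S \<subseteq> F \<and> card S = L}. c S = x"
    using ex_colouring_meeting_all_colours[OF _ \<open>finite I\<close> members pos small] assms(1) by blast
  have "polychromatic_on B f L (stage_size (card B) f L) c"
    unfolding polychromatic_on_def
  proof (intro allI impI)
    fix F x assume "F \<subseteq> B" "card F = f" "x < stage_size (card B) f L"
    then obtain S where "S \<in> {S. S \<subseteq> F \<and> card S = L}" "c S = x"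
      using c unfolding I_def by blast
    then show "\<exists>S\<subseteq>F. card S = L \<and> c S = x"
      by blast
  qed
  then show ?thesis
    by blast
qed

section \<open>Round-robin block codes\<close>

lemma ex_stagewise_labelling:
  assumes "finite B" "\<forall>s<k. polychromatic_on B ((k - s) * L) L (M s) (cs s)" "\<forall>s<k. d s < M s"
  shows "s\<^sub>0 \<le> k \<Longrightarrow> F \<subseteq> B \<Longrightarrow> card F = (k - s\<^sub>0) * L \<Longrightarrow>
    \<exists>g. (\<forall>t\<in>F. g t \<in> {s\<^sub>0..<k}) \<and> (\<forall>s\<in>{s\<^sub>0..<k}. cs s {t\<in>F. g t = s} = d s)"
proof (induction s\<^sub>0 arbitrary: F rule: inc_induct)
  case base
  then have "F = {}"
    using assms(1) finite_subset by fastforce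
  then show ?case
    by simp
next
  case (step s\<^sub>0)
  obtain S where S: "S \<subseteq> F" "card S = L" "cs s\<^sub>0 S = d s\<^sub>0"
    using assms(2,3) step.hyps(2) step.prems unfolding polychromatic_on_def by blast
  have "card (F - S) = (k - Suc s\<^sub>0) * L"
    using S step.hyps(2) step.prems assms(1)
    by (simp add: card_Diff_subset finite_subset diff_mult_distrib)
  then obtain g where g: "\<forall>t\<in>F - S. g t \<in> {Suc s\<^sub>0..<k}"
    "\<forall>s\<in>{Suc s\<^sub>0..<k}. cs s {t\<in>F - S. g t = s} = d s"
    using step.IH[of "F - S"] step.prems by blast
  define g' where "g' t = (if t \<in> S then s\<^sub>0 else g t)" for t
  have "cs s {t\<in>F. g' t = s} = d s" if "s \<in> {s\<^sub>0..<k}" for s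
  proof (cases "s = s\<^sub>0")
    case True
    have "{t\<in>F. g' t = s\<^sub>0} = S"
      using S(1) g(1) unfolding g'_def by force
    then show ?thesis
      using S(3) True by simp
  next
    case False
    then have "{t\<in>F. g' t = s} = {t\<in>F - S. g t = s}"
      unfolding g'_def by auto
    moreover have "s \<in> {Suc s\<^sub>0..<k}"
      using that False by auto
    ultimately show ?thesis
      using g(2) by simp
  qed
  moreover have "g' t \<in> {s\<^sub>0..<k}" if "t \<in> F" for t
  proof (cases "t \<in> S")
    case False
    then have "g t \<in> {Suc s\<^sub>0..<k}"
      using g(1) that by blast
    then show ?thesis
      using False unfolding g'_def by simp
  qed (use step.hyps(2) g'_def in simp)
  ultimately show ?case
    by blast
qed

lemma ex_block_word:
  assumes "\<forall>s<k. polychromatic_on {..<k * L} ((k - s) * L) L (M s) (cs s)" "\<forall>s<k. d s < M s"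
    and "inj_on \<sigma> {..<k}" "\<sigma> ` {..<k} \<subseteq> A"
  shows "\<exists>w\<in>words A (k * L). \<forall>s<k. cs s {t. t < k * L \<and> w ! t = \<sigma> s} = d s"
proof -
  have "\<exists>g. (\<forall>t\<in>{..<k * L}. g t \<in> {0..<k}) \<and> (\<forall>s\<in>{0..<k}. cs s {t\<in>{..<k * L}. g t = s} = d s)"
    by (rule ex_stagewise_labelling[OF _ assms(1,2)]) simp_all
  then obtain g where g: "\<forall>t<k * L. g t < k" "\<forall>s<k. cs s {t\<in>{..<k * L}. g t = s} = d s"
    by (auto simp: atLeast0LessThan)
  define w where "w = map (\<sigma> \<circ> g) [0..<k * L]"
  have "w \<in> words A (k * L)"
    using g(1) assms(4) unfolding w_def words_def by auto
  moreover have "{t. t < k * L \<and> w ! t = \<sigma> s} = {t\<in>{..<k * L}. g t = s}" if "s < k" for s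
    using g(1) that assms(3) unfolding w_def inj_on_def by auto
  ultimately show ?thesis
    using g(2) by (intro bexI[of _ w]) auto
qed

lemma mod_add_mod_diff_eq: "i < k \<Longrightarrow> s < k \<Longrightarrow> ((i + k - s) mod k + s) mod k = (i::nat)"
  by (simp add: mod_add_left_eq)

lemma inj_on_rotation: "inj_on (\<lambda>s. (r + s) mod k) {..<k::nat}"
proof (rule finite_surj_inj)
  show "{..<k} \<subseteq> (\<lambda>s. (r + s) mod k) ` {..<k}"
  proof
    fix i assume "i \<in> {..<k}"
    define s where "s = (i + k - r mod k) mod k"
    have "s < k" "(r mod k + s) mod k = i"
      using \<open>i \<in> {..<k}\<close> mod_add_mod_diff_eq[of i k "r mod k"] unfolding s_def by (simp_all add: add.commute)
    then show "i \<in> (\<lambda>s. (r + s) mod k) ` {..<k}"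
      by (simp add: image_iff mod_add_left_eq) blast
  qed
qed simp

lemma distinguishable_at_isolated_letter:
  assumes "\<And>c. \<not> Gi i c" "\<And>c. \<not> Gi c i" "t < length x" "t < length y" "(x ! t = i) \<noteq> (y ! t = i)"
  shows "distinguishable Gi x y"
  unfolding distinguishable_def using assms by (metis min_less_iff_conj)

lemma length_concat_same_length: "\<forall>xs\<in>set xss. length xs = b \<Longrightarrow> length (concat xss) = length xss * b"
  by (induction xss) auto

lemma nth_concat_same_length:
  "\<forall>xs\<in>set xss. length xs = b \<Longrightarrow> r < length xss \<Longrightarrow> t < b \<Longrightarrow> concat xss ! (r * b + t) = xss ! r ! t"
proof (induction xss arbitrary: r)
  case (Cons xs xss)
  then show ?case
    by (cases r) (auto simp: nth_append add.assoc)
qed simp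

lemma concat_replicate_in_words:
  assumes "\<forall>w\<in>set ws. w \<in> words A b" "length ws * b \<le> n" "c \<in> A"
  shows "concat ws @ replicate (n - length ws * b) c \<in> words A n"
proof -
  have "length (concat ws) = length ws * b"
    using assms(1) length_concat_same_length[of ws b] unfolding words_def by auto
  moreover have "set (concat ws) \<subseteq> A"
    using assms(1) unfolding words_def by auto
  ultimately show ?thesis
    using assms(2,3) unfolding words_def by auto
qed

definition code_size :: "nat \<Rightarrow> nat \<Rightarrow> nat" where
  "code_size k L = (\<Prod>s<k. stage_size (k * L) ((k - s) * L) L)"

lemma code_size_pos: "0 < code_size k L"
  unfolding code_size_def stage_size_def by (intro prod_pos) simp

text \<open>\<open>blk \<delta> r\<close> is block r of the code word for the digit vectors \<open>\<delta>\<close>, where \<open>\<delta> i s\<close> is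
  the s-th digit of user i. Block r serves user (r + s) mod k at stage s, and the colouring
  \<open>cs s\<close> of the positions that carry this user's letter returns its s-th digit.\<close>

definition round_robin_code ::
  "nat \<Rightarrow> nat \<Rightarrow> (nat \<Rightarrow> nat) \<Rightarrow> (nat \<Rightarrow> nat set \<Rightarrow> nat) \<Rightarrow> ((nat \<Rightarrow> nat \<Rightarrow> nat) \<Rightarrow> nat \<Rightarrow> nat list) \<Rightarrow> bool"
where
  "round_robin_code k b M cs blk \<longleftrightarrow>
     (\<forall>\<delta> r. (\<forall>i<k. \<forall>s<k. \<delta> i s < M s) \<longrightarrow> r < k \<longrightarrow>
        blk \<delta> r \<in> words {..<k} b \<and>
        (\<forall>s<k. cs s {t. t < b \<and> blk \<delta> r ! t = (r + s) mod k} = \<delta> ((r + s) mod k) s))"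

lemma ex_stage_colourings:
  "\<exists>cs. \<forall>s<k. polychromatic_on {..<k * L} ((k - s) * L) L (stage_size (k * L) ((k - s) * L) L) (cs s)"
proof -
  have "\<exists>c. s < k \<longrightarrow> polychromatic_on {..<k * L} ((k - s) * L) L (stage_size (k * L) ((k - s) * L) L) c"
    for s
  proof (cases "s < k")
    case True
    then have "1 * L \<le> (k - s) * L"
      by (intro mult_le_mono1) simp
    moreover have "(k - s) * L \<le> card {..<k * L}"
      by simp
    ultimately show ?thesis
      using ex_polychromatic_on_stage_size[of "{..<k * L}" L "(k - s) * L"] by simp
  qed simp
  then have "\<forall>s. \<exists>c. s < k \<longrightarrow> polychromatic_on {..<k * L} ((k - s) * L) L (stage_size (k * L) ((k - s) * L) L) c"
    by blast
  then show ?thesis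
    by (simp only: choice_iff)
qed

lemma ex_round_robin_code:
  assumes "\<forall>s<k. polychromatic_on {..<k * L} ((k - s) * L) L (M s) (cs s)"
  shows "\<exists>blk. round_robin_code k (k * L) M cs blk"
proof -
  have "\<exists>w. (\<forall>i<k. \<forall>s<k. \<delta> i s < M s) \<longrightarrow> r < k \<longrightarrow> w \<in> words {..<k} (k * L) \<and>
          (\<forall>s<k. cs s {t. t < k * L \<and> w ! t = (r + s) mod k} = \<delta> ((r + s) mod k) s)" for \<delta> r
  proof (cases "(\<forall>i<k. \<forall>s<k. \<delta> i s < M s) \<and> r < k")
    case True
    then have digits: "\<forall>s<k. \<delta> ((r + s) mod k) s < M s"
      by simp
    have "(\<lambda>s. (r + s) mod k) ` {..<k} \<subseteq> {..<k}"
      using True by auto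
    then show ?thesis
      using ex_block_word[OF assms digits inj_on_rotation] by blast
  qed blast
  then have "\<forall>\<delta> r. \<exists>w. (\<forall>i<k. \<forall>s<k. \<delta> i s < M s) \<longrightarrow> r < k \<longrightarrow> w \<in> words {..<k} (k * L) \<and>
          (\<forall>s<k. cs s {t. t < k * L \<and> w ! t = (r + s) mod k} = \<delta> ((r + s) mod k) s)"
    by blast
  then have "\<exists>blk. \<forall>\<delta> r. (\<forall>i<k. \<forall>s<k. \<delta> i s < M s) \<longrightarrow> r < k \<longrightarrow>
      blk \<delta> r \<in> words {..<k} (k * L) \<and>
      (\<forall>s<k. cs s {t. t < k * L \<and> blk \<delta> r ! t = (r + s) mod k} = \<delta> ((r + s) mod k) s)"
    by (simp only: choice_iff)
  then show ?thesis
    unfolding round_robin_code_def .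
qed

lemma round_robin_code_separates:
  assumes "round_robin_code k b M cs blk"
    and "\<forall>j<k. \<forall>s<k. \<delta> j s < M s" "\<forall>j<k. \<forall>s<k. \<delta>' j s < M s"
    and "i < k" "s < k" "\<delta> i s \<noteq> \<delta>' i s"
  shows "\<exists>r<k. \<exists>t<b. (blk \<delta> r ! t = i) \<noteq> (blk \<delta>' r ! t = i)"
proof -
  define r where "r = (i + k - s) mod k"
  have r: "r < k" "(r + s) mod k = i"
    unfolding r_def using assms(4,5) mod_add_mod_diff_eq by simp_all
  have decode: "cs s {t. t < b \<and> blk \<delta>\<^sub>0 r ! t = i} = \<delta>\<^sub>0 i s"
    if "\<forall>j<k. \<forall>s<k. \<delta>\<^sub>0 j s < M s" for \<delta>\<^sub>0
  proof -
    have "\<forall>s'<k. cs s' {t. t < b \<and> blk \<delta>\<^sub>0 r ! t = (r + s') mod k} = \<delta>\<^sub>0 ((r + s') mod k) s'"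
      using assms(1)[unfolded round_robin_code_def, rule_format, of "\<delta>\<^sub>0" r, OF that[rule_format] r(1)]
      by blast
    then show ?thesis
      using assms(5) r(2) by metis
  qed
  have "cs s {t. t < b \<and> blk \<delta> r ! t = i} = \<delta> i s" "cs s {t. t < b \<and> blk \<delta>' r ! t = i} = \<delta>' i s"
    using decode assms(2,3) by blast+
  then have "{t. t < b \<and> blk \<delta> r ! t = i} \<noteq> {t. t < b \<and> blk \<delta>' r ! t = i}"
    using assms(6) by force
  then have "\<exists>t<b. (blk \<delta> r ! t = i) \<noteq> (blk \<delta>' r ! t = i)"
    by blast
  then show ?thesis
    using r(1) by blast
qed

lemma distinguishable_concat_at_isolated_letter:
  assumes "\<And>c. \<not> Gi i c" "\<And>c. \<not> Gi c i"
    and "\<forall>w\<in>set ws. length w = b" "\<forall>w\<in>set ws'. length w = b" "length ws' = length ws"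
    and "r < length ws" "t < b" "(ws ! r ! t = i) \<noteq> (ws' ! r ! t = i)"
  shows "distinguishable Gi (concat ws @ p) (concat ws' @ p')"
proof -
  have "r * b + t < Suc r * b"
    using assms(7) by simp
  also have "\<dots> \<le> length ws * b"
    using assms(6) by (intro mult_le_mono1) simp
  finally have "r * b + t < length ws * b" .
  moreover have "length (concat ws) = length ws * b" "length (concat ws') = length ws * b"
    using assms(3-5) length_concat_same_length by metis+
  ultimately have "(concat ws @ p) ! (r * b + t) = ws ! r ! t" "(concat ws' @ p') ! (r * b + t) = ws' ! r ! t"
    "r * b + t < length (concat ws @ p)" "r * b + t < length (concat ws' @ p')"
    using assms(3-7) nth_concat_same_length[of ws b r t] nth_concat_same_length[of ws' b r t]
    by (simp_all add: nth_append)
  then show ?thesis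
    using assms(8) by (intro distinguishable_at_isolated_letter[of Gi i "r * b + t", OF assms(1,2)]) simp_all
qed

lemma feasible_vector_isolated_letters:
  fixes G :: "nat \<Rightarrow> nat \<Rightarrow> nat \<Rightarrow> bool"
  assumes "0 < k" "k * (k * L) \<le> n" "\<And>i c. i < k \<Longrightarrow> \<not> G i i c \<and> \<not> G i c i"
  shows "feasible_vector {..<k} k G n (\<lambda>_. code_size k L)"
proof -
  define b where "b = k * L"
  define M where "M s = stage_size b ((k - s) * L) L" for s
  define T where "T = tuples k (\<lambda>_. code_size k L)"
  obtain cs where "\<forall>s<k. polychromatic_on {..<b} ((k - s) * L) L (M s) (cs s)"
    using ex_stage_colourings unfolding M_def b_def by blast
  then obtain blk where blk: "round_robin_code k b M cs blk"
    using ex_round_robin_code unfolding b_def by blast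
  have "card (PiE {..<k} (\<lambda>s. {..<M s})) = code_size k L"
    unfolding M_def b_def code_size_def by (simp add: card_PiE)
  then obtain enc where enc: "bij_betw enc {..<code_size k L} (PiE {..<k} (\<lambda>s. {..<M s}))"
    using ex_bij_betw_nat_finite[of "PiE {..<k} (\<lambda>s. {..<M s})"] by (auto simp: finite_PiE atLeast0LessThan)
  define \<delta> where "\<delta> a i = enc (a i)" for a :: "nat \<Rightarrow> nat" and i
  have \<delta>: "\<delta> a i \<in> PiE {..<k} (\<lambda>s. {..<M s})" if "a \<in> T" "i < k" for a i
    using that enc unfolding \<delta>_def T_def tuples_def by (auto dest: bij_betwE)
  then have digits: "\<forall>i<k. \<forall>s<k. \<delta> a i s < M s" if "a \<in> T" for a
    using that by (auto simp: PiE_iff)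
  define E where "E a = concat (map (blk (\<delta> a)) [0..<k]) @ replicate (n - k * b) 0" for a
  have blocks: "\<forall>w\<in>set (map (blk (\<delta> a)) [0..<k]). w \<in> words {..<k} b" if "a \<in> T" for a
    using blk digits[OF that] unfolding round_robin_code_def by auto
  have E_words: "E a \<in> words {..<k} n" if "a \<in> T" for a
    unfolding E_def using concat_replicate_in_words[OF blocks[OF that]] assms(1,2) b_def by simp
  have E_distinguishable: "distinguishable (G i) (E a) (E a')"
    if user: "i < k" "a \<in> T" "a' \<in> T" "a i \<noteq> a' i" for i a a'
  proof -
    have "\<delta> a i \<noteq> \<delta> a' i"
      using user enc unfolding \<delta>_def T_def tuples_def bij_betw_def inj_on_def by auto
    then obtain s where "s < k" "\<delta> a i s \<noteq> \<delta> a' i s"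
      using PiE_ext[OF \<delta>[OF user(2,1)] \<delta>[OF user(3,1)]] by blast
    then obtain r t where "r < k" "t < b" "(blk (\<delta> a) r ! t = i) \<noteq> (blk (\<delta> a') r ! t = i)"
      using round_robin_code_separates[OF blk digits[OF user(2)] digits[OF user(3)] user(1)] by blast
    moreover have "\<not> G i i c" "\<not> G i c i" for c
      using assms(3) user(1) by blast+
    ultimately show ?thesis
      unfolding E_def using blocks[OF user(2)] blocks[OF user(3)]
      by (intro distinguishable_concat_at_isolated_letter[where r = r and t = t and b = b])
        (simp_all add: words_def)
  qed
  show ?thesis
    using code_size_pos unfolding feasible_vector_def T_def[symmetric]
    by (intro conjI exI[of _ E] allI impI ballI) (simp_all add: E_words E_distinguishable)
qed

section \<open>The rate of the block code\<close>

lemma stage_size_le_binomial: "L \<le> f \<Longrightarrow> stage_size b f L \<le> f choose L"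
  unfolding stage_size_def by (simp add: Suc_leI)

lemma binomial_le_stage_size: "f choose L \<le> 4 * (b + 1) * stage_size b f L"
proof (cases "(f choose L) div (2 * (b + 1)) = 0")
  case True
  then have "f choose L < 2 * (b + 1)"
    by (simp add: div_eq_0_iff)
  then show ?thesis
    unfolding stage_size_def True by simp
next
  case False
  define q where "q = (f choose L) div (2 * (b + 1))"
  have "f choose L = q * (2 * (b + 1)) + (f choose L) mod (2 * (b + 1))"
    unfolding q_def by (rule div_mult_mod_eq[symmetric])
  moreover have "(f choose L) mod (2 * (b + 1)) < 2 * (b + 1)"
    by simp
  ultimately have "f choose L < q * (2 * (b + 1)) + 2 * (b + 1)"
    by linarith
  also have "\<dots> = (q + 1) * (2 * (b + 1))"
    by simp
  also have "\<dots> \<le> (q + q) * (2 * (b + 1))"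
    using False unfolding q_def by (intro mult_le_mono1) simp
  also have "\<dots> = 4 * (b + 1) * q"
    by (simp add: algebra_simps)
  finally show ?thesis
    using False unfolding stage_size_def q_def by simp
qed

lemma code_size_eq_prod: "code_size k L = (\<Prod>m=1..k. stage_size (k * L) (m * L) L)"
  unfolding code_size_def atLeast0LessThan[symmetric] prod.atLeastLessThan_rev_at_least_Suc_atMost
  by (intro prod.cong) auto

lemma code_size_le: "code_size k L \<le> k ^ (k * L)"
proof -
  have "code_size k L \<le> (\<Prod>m=1..k. m * L choose L)"
    unfolding code_size_eq_prod by (intro prod_mono) (auto intro: stage_size_le_binomial)
  also have "\<dots> \<le> k ^ (k * L)"
    by (rule prod_binomial_multiples_le)
  finally show ?thesis .
qed

lemma power_le_code_size: "k ^ (k * L) \<le> (4 * (k * L + 1)) ^ (2 * k) * code_size k L"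
proof -
  define c where "c = 4 * (k * L + 1)"
  have "k ^ (k * L) \<le> (\<Prod>m=1..k. (m * L + 1) * (m * L choose L))"
    by (rule power_le_prod_binomial_multiples)
  also have "\<dots> \<le> (\<Prod>m=1..k. c * (c * stage_size (k * L) (m * L) L))"
  proof (intro prod_mono conjI)
    fix m assume "m \<in> {1..k}"
    then have "m * L \<le> k * L"
      by simp
    then have "m * L + 1 \<le> k * L + 1"
      by (rule add_right_mono)
    also have "\<dots> \<le> c"
      unfolding c_def by simp
    finally have "m * L + 1 \<le> c" .
    moreover have "m * L choose L \<le> c * stage_size (k * L) (m * L) L"
      using binomial_le_stage_size[of "m * L" L "k * L"] unfolding c_def by simp
    ultimately show "(m * L + 1) * (m * L choose L) \<le> c * (c * stage_size (k * L) (m * L) L)"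
      by (rule mult_le_mono)
  qed simp
  also have "\<dots> = c ^ (2 * k) * code_size k L"
    unfolding code_size_eq_prod prod.distrib by (simp add: power_mult_distrib mult_2 power_add)
  finally show ?thesis
    unfolding c_def .
qed

lemma log_code_size_bounds:
  assumes "0 < k"
  shows "real (k * L) * log 2 k - real (2 * k) * log 2 (4 * (real (k * L) + 1)) \<le> log 2 (code_size k L)"
    and "log 2 (code_size k L) \<le> real (k * L) * log 2 k"
proof -
  define c where "c = 4 * (real (k * L) + 1)"
  have "0 < c"
    unfolding c_def by (simp add: add_nonneg_pos)
  have "real (k ^ (k * L)) \<le> real ((4 * (k * L + 1)) ^ (2 * k) * code_size k L)"
    using power_le_code_size by (simp only: of_nat_le_iff)
  also have "\<dots> = c ^ (2 * k) * real (code_size k L)"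
    unfolding c_def by (simp add: algebra_simps)
  finally have "log 2 (real k ^ (k * L)) \<le> log 2 (c ^ (2 * k) * code_size k L)"
    using assms code_size_pos \<open>0 < c\<close> by (subst log_le_cancel_iff) auto
  then show "real (k * L) * log 2 k - real (2 * k) * log 2 c \<le> log 2 (code_size k L)"
    using assms code_size_pos \<open>0 < c\<close> by (simp add: log_nat_power log_mult)
  have "real (code_size k L) \<le> real (k ^ (k * L))"
    using code_size_le by (simp only: of_nat_le_iff)
  then have "log 2 (code_size k L) \<le> log 2 (real k ^ (k * L))"
    using assms code_size_pos by (subst log_le_cancel_iff) auto
  then show "log 2 (code_size k L) \<le> real (k * L) * log 2 k"
    using assms by (simp add: log_nat_power)
qed

lemma log_code_size_div_bounds:
  assumes "0 < k" "0 < n"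
  shows "log 2 k / k - real k * log 2 k / n - 2 * real k * log 2 (4 * (real n + 1)) / n
           \<le> log 2 (code_size k (n div (k * k))) / n"
    and "log 2 (code_size k (n div (k * k))) / n \<le> log 2 k / k"
proof -
  define L where "L = n div (k * k)"
  have "n = k * k * L + n mod (k * k)"
    unfolding L_def by (simp add: mult.commute)
  moreover have "n mod (k * k) < k * k"
    using assms by simp
  ultimately have "real k * real (k * L) \<le> real n" "real n < real k * real (k * L) + real k * real k"
    by (simp_all only: of_nat_mult[symmetric] of_nat_add[symmetric] of_nat_le_iff of_nat_less_iff mult.assoc)
  then have "real n / k - k \<le> real (k * L)" "real (k * L) \<le> real n / k"
    using assms by (simp_all add: field_simps)
  moreover have "real n / k \<le> real n"
    using assms mult_left_mono[of 1 "real k" "real n"] by (simp add: divide_le_eq)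
  ultimately have "real (k * L) \<le> real n"
    by linarith
  have "0 \<le> log 2 k"
    using assms by simp
  have "log 2 (4 * (real (k * L) + 1)) \<le> log 2 (4 * (real n + 1))"
    using \<open>real (k * L) \<le> real n\<close> by (simp add: add_nonneg_pos)
  have "log 2 k / k - real k * log 2 k / n - 2 * real k * log 2 (4 * (real n + 1)) / n
          = ((real n / k - k) * log 2 k - 2 * real k * log 2 (4 * (real n + 1))) / n"
    using assms by (simp add: field_simps)
  also have "\<dots> \<le> (real (k * L) * log 2 k - real (2 * k) * log 2 (4 * (real (k * L) + 1))) / n"
    using \<open>real n / k - k \<le> real (k * L)\<close> \<open>0 \<le> log 2 k\<close> \<open>log 2 (4 * _) \<le> _\<close>
    by (intro divide_right_mono diff_mono mult_right_mono) (auto intro: mult_left_mono)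
  also have "\<dots> \<le> log 2 (code_size k L) / n"
    using log_code_size_bounds(1)[OF assms(1)] by (intro divide_right_mono) auto
  finally show "log 2 k / k - real k * log 2 k / n - 2 * real k * log 2 (4 * (real n + 1)) / n
                  \<le> log 2 (code_size k (n div (k * k))) / n"
    unfolding L_def .
  have "log 2 (code_size k L) / n \<le> real (k * L) * log 2 k / n"
    using log_code_size_bounds(2)[OF assms(1)] by (intro divide_right_mono) auto
  also have "\<dots> \<le> (real n / k) * log 2 k / n"
    using \<open>real (k * L) \<le> real n / k\<close> \<open>0 \<le> log 2 k\<close> by (intro divide_right_mono mult_right_mono) auto
  also have "\<dots> = log 2 k / k"
    using assms(2) by simp
  finally show "log 2 (code_size k (n div (k * k))) / n \<le> log 2 k / k"
    unfolding L_def .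
qed

lemma code_size_rate:
  assumes "0 < k"
  shows "(\<lambda>n. log 2 (code_size k (n div (k * k))) / n) \<longlonglongrightarrow> log 2 k / k"
proof (rule tendsto_sandwich[OF _ _ _ tendsto_const])
  have "(\<lambda>n. 1 / real n) \<longlonglongrightarrow> 0" "(\<lambda>n. log 2 (4 * (real n + 1)) / real n) \<longlonglongrightarrow> 0"
    by real_asymp+
  then have "(\<lambda>n. log 2 k / k - real k * log 2 k * (1 / n) - 2 * real k * (log 2 (4 * (real n + 1)) / n))
               \<longlonglongrightarrow> log 2 k / k - real k * log 2 k * 0 - 2 * real k * 0"
    by (intro tendsto_intros)
  then show "(\<lambda>n. log 2 k / k - real k * log 2 k / n - 2 * real k * log 2 (4 * (real n + 1)) / n)
               \<longlonglongrightarrow> log 2 k / k"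
    by simp
  show "\<forall>\<^sub>F n in sequentially. log 2 k / k - real k * log 2 k / n - 2 * real k * log 2 (4 * (real n + 1)) / n
          \<le> log 2 (code_size k (n div (k * k))) / n"
    "\<forall>\<^sub>F n in sequentially. log 2 (code_size k (n div (k * k))) / n \<le> log 2 k / k"
    unfolding eventually_sequentially using log_code_size_div_bounds[OF assms] by (auto intro!: exI[of _ 1])
qed

theorem corollary6:
  fixes k :: nat
  assumes "k \<ge> 3"
  shows "feasible_rate {..<k} k
           (\<lambda>i a b. a \<noteq> b \<and> a \<noteq> i \<and> b \<noteq> i \<and> a \<in> {..<k} \<and> b \<in> {..<k})
           (\<lambda>i. log 2 (real k) / real k)"
proof -
  have "0 < k" \<comment> \<open>the only use of \<open>k \<ge> 3\<close>\<close>
    using assms by simp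
  have "k * (k * (n div (k * k))) \<le> n" for n
    by (metis div_times_less_eq_dividend mult.assoc mult.commute)
  then have "feasible_vector {..<k} k
              (\<lambda>i a b. a \<noteq> b \<and> a \<noteq> i \<and> b \<noteq> i \<and> a \<in> {..<k} \<and> b \<in> {..<k})
              n (\<lambda>_. code_size k (n div (k * k)))" for n
    using \<open>0 < k\<close> by (intro feasible_vector_isolated_letters) auto
  then show ?thesis
    unfolding feasible_rate_def using code_size_rate[OF \<open>0 < k\<close>]
    by (intro exI[of _ "\<lambda>n _. code_size k (n div (k * k))"]) auto
qed

end
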